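(* Let $G$ be a finite simple graph and let $D$ be an open irredundant dominating set of $G$. Then for any finite simple graph $H$, the set $D \times V(H)$ is an open irredundant, minimal dominating set of the Cartesian product $G \,\square\, H$.
   Context: For $u\in A\subseteq V(G)$, the external private neighborhood of $u$ with respect to $A$ is $\mathrm{epn}[u,A]=N(u)-N[A-\{u\}]$, the set of vertices outside $A$ adjacent to $u$ and to no other vertex of $A$. A set $A$ is open irredundant if $\mathrm{epn}[u,A]\neq\emptyset$ for every $u\in A$. The Cartesian product $G\,\square\, H$ has vertex set $V(G)\times V(H)$, with $(g_1,h_1)$ adjacent to $(g_2,h_2)$ iff either ($g_1=g_2$ and $h_1h_2\in E(H)$) or ($h_1=h_2$ and $g_1g_2\in E(G)$). *)

theory Defs
  imports Main
begin

definition simple_graph :: "'a set \<Rightarrow> ('a \<Rightarrow> 'a \<Rightarrow> bool) \<Rightarrow> bool" where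
  "simple_graph V E \<longleftrightarrow> finite V \<and> (\<forall>x y. E x y \<longrightarrow> x \<in> V \<and> y \<in> V)
     \<and> (\<forall>x y. E x y \<longrightarrow> E y x) \<and> (\<forall>x. \<not> E x x)"

definition open_nbhd :: "'a set \<Rightarrow> ('a \<Rightarrow> 'a \<Rightarrow> bool) \<Rightarrow> 'a \<Rightarrow> 'a set" where
  "open_nbhd V E u = {v \<in> V. E u v}"

definition closed_nbhd_set :: "'a set \<Rightarrow> ('a \<Rightarrow> 'a \<Rightarrow> bool) \<Rightarrow> 'a set \<Rightarrow> 'a set" where
  "closed_nbhd_set V E A = (\<Union>u\<in>A. insert u (open_nbhd V E u))"

definition epn :: "'a set \<Rightarrow> ('a \<Rightarrow> 'a \<Rightarrow> bool) \<Rightarrow> 'a \<Rightarrow> 'a set \<Rightarrow> 'a set" where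
  "epn V E u A = open_nbhd V E u - closed_nbhd_set V E (A - {u})"

definition open_irredundant :: "'a set \<Rightarrow> ('a \<Rightarrow> 'a \<Rightarrow> bool) \<Rightarrow> 'a set \<Rightarrow> bool" where
  "open_irredundant V E A \<longleftrightarrow> A \<subseteq> V \<and> (\<forall>u\<in>A. epn V E u A \<noteq> {})"

definition dominating :: "'a set \<Rightarrow> ('a \<Rightarrow> 'a \<Rightarrow> bool) \<Rightarrow> 'a set \<Rightarrow> bool" where
  "dominating V E D \<longleftrightarrow> D \<subseteq> V \<and> V \<subseteq> closed_nbhd_set V E D"

definition minimal_dominating :: "'a set \<Rightarrow> ('a \<Rightarrow> 'a \<Rightarrow> bool) \<Rightarrow> 'a set \<Rightarrow> bool" where
  "minimal_dominating V E D \<longleftrightarrow> dominating V E D \<and> (\<forall>D'. D' \<subset> D \<longrightarrow> \<not> dominating V E D')"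

definition cart_adj :: "('a \<Rightarrow> 'a \<Rightarrow> bool) \<Rightarrow> ('b \<Rightarrow> 'b \<Rightarrow> bool) \<Rightarrow> 'a \<times> 'b \<Rightarrow> 'a \<times> 'b \<Rightarrow> bool" where
  "cart_adj EG EH p q \<longleftrightarrow>
     (fst p = fst q \<and> EH (snd p) (snd q)) \<or> (snd p = snd q \<and> EG (fst p) (fst q))"

end

theory Submission
  imports Defs
begin

text \<open>An external private neighbour w of u with respect to D in G yields the external private
neighbour (w, h) of (u, h) with respect to D \<times> V(H): the only neighbours of (w, h) that could lie
in D \<times> V(H) are the (w, h'), excluded since w \<notin> D, and the (u', h) with u' adjacent to w,
excluded since w is private to u. Minimality then holds for every open irredundant dominating set: removing a vertex u
leaves a private neighbour of u undominated.\<close>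

lemma simple_graph_irreflp: "simple_graph V E \<Longrightarrow> irreflp E"
  unfolding simple_graph_def irreflp_def by blast

lemma closed_nbhd_set_mono: "A \<subseteq> B \<Longrightarrow> closed_nbhd_set V E A \<subseteq> closed_nbhd_set V E B"
  unfolding closed_nbhd_set_def by blast

lemma epn_notin:
  assumes "irreflp E" and "w \<in> epn V E u A"
  shows "w \<notin> A"
  using assms unfolding epn_def open_nbhd_def closed_nbhd_set_def irreflp_def by blast

lemma open_irredundant_dominating_imp_minimal_dominating:
  assumes irred: "open_irredundant V E D" and dom: "dominating V E D"
  shows "minimal_dominating V E D"
  unfolding minimal_dominating_def
proof (intro conjI allI impI notI)
  fix D' assume sub: "D' \<subset> D" and dom': "dominating V E D'"
  obtain u where u: "u \<in> D" "u \<notin> D'" using sub by blast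
  obtain w where w: "w \<in> epn V E u D" using irred u(1) unfolding open_irredundant_def by blast
  have "w \<in> closed_nbhd_set V E D'"
    using w dom' unfolding epn_def open_nbhd_def dominating_def by blast
  also have "\<dots> \<subseteq> closed_nbhd_set V E (D - {u})"
    using sub u by (intro closed_nbhd_set_mono) blast
  finally show False using w unfolding epn_def by blast
qed (fact dom)

lemma epn_cart_product:
  assumes irr: "irreflp EG" and w: "w \<in> epn VG EG u D" and h: "h \<in> VH"
  shows "(w, h) \<in> epn (VG \<times> VH) (cart_adj EG EH) (u, h) (D \<times> VH)"
proof -
  have "w \<notin> D" using epn_notin[OF irr w] .
  have wV: "w \<in> VG" and uw: "EG u w" and w_private: "w \<notin> closed_nbhd_set VG EG (D - {u})"
    using w unfolding epn_def open_nbhd_def by auto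
  have "(w, h) \<in> open_nbhd (VG \<times> VH) (cart_adj EG EH) (u, h)"
    using wV h uw unfolding open_nbhd_def cart_adj_def by simp
  moreover have "(w, h) \<notin> closed_nbhd_set (VG \<times> VH) (cart_adj EG EH) (D \<times> VH - {(u, h)})"
  proof
    assume "(w, h) \<in> closed_nbhd_set (VG \<times> VH) (cart_adj EG EH) (D \<times> VH - {(u, h)})"
    then obtain u' h' where q: "u' \<in> D" "h' \<in> VH" "(u', h') \<noteq> (u, h)"
      and "(w, h) = (u', h') \<or> cart_adj EG EH (u', h') (w, h)"
      unfolding closed_nbhd_set_def open_nbhd_def by blast
    then consider "u' = w" | "h' = h" "EG u' w"
      unfolding cart_adj_def by auto
    then show False
    proof cases
      case 1
      with q \<open>w \<notin> D\<close> show False by blast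
    next
      case 2
      with q wV have "w \<in> closed_nbhd_set VG EG (D - {u})"
        unfolding closed_nbhd_set_def open_nbhd_def by blast
      with w_private show False ..
    qed
  qed
  ultimately show ?thesis unfolding epn_def by blast
qed

lemma open_irredundant_cart_product:
  assumes "irreflp EG" and irred: "open_irredundant VG EG D"
  shows "open_irredundant (VG \<times> VH) (cart_adj EG EH) (D \<times> VH)"
  unfolding open_irredundant_def
proof (intro conjI ballI)
  show "D \<times> VH \<subseteq> VG \<times> VH" using irred unfolding open_irredundant_def by blast
next
  fix p assume "p \<in> D \<times> VH"
  then obtain u h where p: "p = (u, h)" "u \<in> D" "h \<in> VH" by blast
  obtain w where w: "w \<in> epn VG EG u D" using irred p(2) unfolding open_irredundant_def by blast
  show "epn (VG \<times> VH) (cart_adj EG EH) p (D \<times> VH) \<noteq> {}"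
    using epn_cart_product[OF assms(1) w p(3)] p(1) by blast
qed

lemma dominating_cart_product:
  assumes dom: "dominating VG EG D"
  shows "dominating (VG \<times> VH) (cart_adj EG EH) (D \<times> VH)"
  unfolding dominating_def
proof (intro conjI subsetI)
  show "p \<in> VG \<times> VH" if "p \<in> D \<times> VH" for p using that dom unfolding dominating_def by blast
next
  fix p assume "p \<in> VG \<times> VH"
  then obtain g h where p: "p = (g, h)" "g \<in> VG" "h \<in> VH" by blast
  then obtain d where "d \<in> D" "g = d \<or> EG d g"
    using dom unfolding dominating_def closed_nbhd_set_def open_nbhd_def by blast
  with p show "p \<in> closed_nbhd_set (VG \<times> VH) (cart_adj EG EH) (D \<times> VH)"
    unfolding closed_nbhd_set_def open_nbhd_def cart_adj_def by (intro UN_I[of "(d, h)"]) auto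
qed

theorem lemma14:
  fixes VG :: "'a set" and EG :: "'a \<Rightarrow> 'a \<Rightarrow> bool"
    and VH :: "'b set" and EH :: "'b \<Rightarrow> 'b \<Rightarrow> bool" and D :: "'a set"
  assumes "simple_graph VG EG"
    and "open_irredundant VG EG D"
    and "dominating VG EG D"
    and "simple_graph VH EH"
  shows "open_irredundant (VG \<times> VH) (cart_adj EG EH) (D \<times> VH)
       \<and> minimal_dominating (VG \<times> VH) (cart_adj EG EH) (D \<times> VH)"
proof -
  have "open_irredundant (VG \<times> VH) (cart_adj EG EH) (D \<times> VH)"
    using open_irredundant_cart_product[OF simple_graph_irreflp[OF assms(1)] assms(2)] .
  moreover have "dominating (VG \<times> VH) (cart_adj EG EH) (D \<times> VH)"
    using dominating_cart_product[OF assms(3)] .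
  ultimately show ?thesis
    using open_irredundant_dominating_imp_minimal_dominating by blast
qed

end
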